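(* Let $G=K_{n_1}\,\square\,\cdots\,\square\, K_{n_d}$, where each $n_j\geq 2$ is even and $d\geq 2$ is odd. Then for every vertex $u$ of $G$, $\uparrow^{2}G$ has Laplacian perfect state transfer between $(0,u)$ and $(1,u)$. In particular, if $q\geq 2$ is even (and $d\geq2$ is odd), then for every vertex $u$ of the Hamming graph $H(d,q)$, $\uparrow^{2}H(d,q)$ has Laplacian perfect state transfer between $(0,u)$ and $(1,u)$.
   Context: All graphs are simple, undirected and unweighted. $K_n$ is the complete graph on $n$ vertices. The Cartesian product $G\,\square\, H$ of graphs on $m$ and $n$ vertices is the graph with Laplacian $L(G)\otimes I_n+I_m\otimes L(H)$, where $L=D-A$. The Hamming graph $H(d,q)$ is the Cartesian product of $d$ copies of $K_q$. The blow-up $\uparrow^{2}G$ has vertex set $\mathbb{Z}_2\times V(G)$, with $(l,u)\sim(m,v)$ iff $u\sim v$ in $G$. A graph with Laplacian $L$ has Laplacian perfect state transfer between $a,b$ if $\exp(i\tau L)\mathbf{e}_a=\gamma\mathbf{e}_b$ for some $\tau>0$, $\gamma\in\mathbb{C}$. *)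

theory Defs
  imports Complex_Main
begin

text \<open>A simple graph is given by a vertex set and an adjacency relation
 (symmetric, irreflexive, only between vertices of the set).\<close>
type_synonym 'v graph = "'v set \<times> ('v \<Rightarrow> 'v \<Rightarrow> bool)"

definition verts :: "'v graph \<Rightarrow> 'v set" where "verts G = fst G"
definition adj :: "'v graph \<Rightarrow> 'v \<Rightarrow> 'v \<Rightarrow> bool" where "adj G = snd G"

definition degree :: "'v graph \<Rightarrow> 'v \<Rightarrow> nat" where
  "degree G u = card {w \<in> verts G. adj G u w}"

definition laplacian :: "'v graph \<Rightarrow> 'v \<Rightarrow> 'v \<Rightarrow> complex" where
  "laplacian G x y = (if x = y then of_nat (degree G x) else 0) - (if adj G x y then 1 else 0)"

fun mat_pow_on :: "'v set \<Rightarrow> ('v \<Rightarrow> 'v \<Rightarrow> complex) \<Rightarrow> nat \<Rightarrow> 'v \<Rightarrow> 'v \<Rightarrow> complex" where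
  "mat_pow_on V A 0 x y = (if x = y then 1 else 0)"
| "mat_pow_on V A (Suc k) x y = (\<Sum>w\<in>V. A x w * mat_pow_on V A k w y)"

definition mat_exp_on :: "'v set \<Rightarrow> ('v \<Rightarrow> 'v \<Rightarrow> complex) \<Rightarrow> 'v \<Rightarrow> 'v \<Rightarrow> complex" where
  "mat_exp_on V A x y = (\<Sum>k. mat_pow_on V A k x y / of_nat (fact k))"

definition lap_pst :: "'v graph \<Rightarrow> 'v \<Rightarrow> 'v \<Rightarrow> bool" where
  "lap_pst G a b \<longleftrightarrow> (\<exists>\<tau>::real. \<tau> > 0 \<and> (\<exists>\<gamma>::complex. \<forall>c\<in>verts G.
      mat_exp_on (verts G) (\<lambda>x y. \<i> * of_real \<tau> * laplacian G x y) c a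
        = (if c = b then \<gamma> else 0)))"

definition complete_graph :: "nat \<Rightarrow> nat graph" where
  "complete_graph n = ({0..<n}, \<lambda>x y. x \<in> {0..<n} \<and> y \<in> {0..<n} \<and> x \<noteq> y)"

definition cart_prod :: "'v graph list \<Rightarrow> 'v list graph" where
  "cart_prod Gs =
    (let V = {xs. length xs = length Gs \<and> (\<forall>j<length Gs. xs ! j \<in> verts (Gs ! j))}
     in (V, \<lambda>xs ys. xs \<in> V \<and> ys \<in> V \<and>
           (\<exists>j<length Gs. adj (Gs ! j) (xs ! j) (ys ! j) \<and>
              (\<forall>i<length Gs. i \<noteq> j \<longrightarrow> xs ! i = ys ! i))))"

definition hamming :: "nat \<Rightarrow> nat \<Rightarrow> nat list graph" where
  "hamming d q = cart_prod (replicate d (complete_graph q))"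

definition blowup2 :: "'v graph \<Rightarrow> (nat \<times> 'v) graph" where
  "blowup2 G = ({0, 1} \<times> verts G, \<lambda>(l, u) (m, v). l \<in> {0,1} \<and> m \<in> {0,1} \<and> adj G u v)"

end

(* The Laplacian of the blow-up acts on vectors that are constant on the fibres {0, 1} \<times> {x} as
   twice the Laplacian of G, and the twin difference e_(0,u) - e_(1,u) is an eigenvector for the
   eigenvalue 2 deg u.  Write e_(0,u) as half the lift of e_u plus half the twin difference.  At time
   pi/2 the first half is fixed when e_u is a sum of Laplacian eigenvectors of G with even
   eigenvalues, and the second half changes sign when deg u is odd; the result is e_(1,u).
   For a Cartesian product of complete graphs K_n with n even, e_u is a sum of tensor products of
   the eigenvectors e_x - 1/n (eigenvalue n) and 1/n (eigenvalue 0) of the factors, and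
   deg u = (n_1 - 1) + ... + (n_d - 1) is odd exactly when d is odd. *)

theory Submission
  imports Defs
begin

section \<open>Spectral expansion of the matrix exponential\<close>

definition mat_vec_on :: "'v set \<Rightarrow> ('v \<Rightarrow> 'v \<Rightarrow> complex) \<Rightarrow> ('v \<Rightarrow> complex) \<Rightarrow> 'v \<Rightarrow> complex" where
  "mat_vec_on V M f x = (\<Sum>y\<in>V. M x y * f y)"

definition in_eigenspace_on :: "'v set \<Rightarrow> ('v \<Rightarrow> 'v \<Rightarrow> complex) \<Rightarrow> complex \<Rightarrow> ('v \<Rightarrow> complex) \<Rightarrow> bool" where
  "in_eigenspace_on V M \<mu> f \<longleftrightarrow> (\<forall>x\<in>V. mat_vec_on V M f x = \<mu> * f x)"

definition eigen_expansion ::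
    "'v set \<Rightarrow> ('v \<Rightarrow> 'v \<Rightarrow> complex) \<Rightarrow> 'v \<Rightarrow> (complex \<times> ('v \<Rightarrow> complex)) list \<Rightarrow> bool" where
  "eigen_expansion V M a F \<longleftrightarrow>
     (\<forall>(\<mu>, f)\<in>set F. in_eigenspace_on V M \<mu> f) \<and>
     (\<forall>x\<in>V. (if x = a then 1 else 0) = (\<Sum>(_, f)\<leftarrow>F. f x))"

lemma mat_vec_on_mult_const: "mat_vec_on V M (\<lambda>y. f y * c) x = mat_vec_on V M f x * c"
  by (simp add: mat_vec_on_def sum_distrib_right mult.assoc)

lemma mat_vec_on_const_mult: "mat_vec_on V M (\<lambda>y. c * f y) x = c * mat_vec_on V M f x"
  by (simp add: mat_vec_on_def sum_distrib_left mult.left_commute)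

lemma in_eigenspace_on_divide:
  "in_eigenspace_on V M \<mu> f \<Longrightarrow> in_eigenspace_on V M \<mu> (\<lambda>x. f x / c)"
  by (simp add: in_eigenspace_on_def mat_vec_on_def sum_divide_distrib[symmetric])

lemma in_eigenspace_on_scale:
  "in_eigenspace_on V M \<mu> f \<Longrightarrow> in_eigenspace_on V (\<lambda>x y. c * M x y) (c * \<mu>) f"
  by (simp add: in_eigenspace_on_def mat_vec_on_def sum_distrib_left[symmetric] mult.assoc)

lemma eigen_expansion_scale:
  "eigen_expansion V M a F \<Longrightarrow>
   eigen_expansion V (\<lambda>x y. c * M x y) a (map (\<lambda>(\<mu>, f). (c * \<mu>, f)) F)"
  by (auto simp: eigen_expansion_def in_eigenspace_on_scale o_def split_def)

lemma mat_pow_on_eigen_expansion: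
  assumes F: "eigen_expansion V M a F" and b: "b \<in> V"
  shows "mat_pow_on V M k b a = (\<Sum>(\<mu>, f)\<leftarrow>F. \<mu> ^ k * f b)"
  using b
proof (induction k arbitrary: b)
  case 0
  then show ?case
    using F by (simp add: eigen_expansion_def)
next
  case (Suc k)
  have "mat_pow_on V M (Suc k) b a = (\<Sum>y\<in>V. M b y * (\<Sum>(\<mu>, f)\<leftarrow>F. \<mu> ^ k * f y))"
    using Suc.IH by simp
  also have "\<dots> = (\<Sum>(\<mu>, f)\<leftarrow>F. \<mu> ^ k * mat_vec_on V M f b)"
    unfolding mat_vec_on_def
    by (induction F) (auto simp: sum.distrib sum_distrib_left algebra_simps)
  also have "\<dots> = (\<Sum>(\<mu>, f)\<leftarrow>F. \<mu> ^ Suc k * f b)"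
    using F Suc.prems unfolding eigen_expansion_def in_eigenspace_on_def
    by (auto intro!: arg_cong[where f = sum_list] map_cong)
  finally show ?case .
qed

lemma sums_sum_list:
  fixes g :: "'a \<Rightarrow> nat \<Rightarrow> 'b :: real_normed_vector"
  shows "(\<And>p. p \<in> set ps \<Longrightarrow> g p sums s p) \<Longrightarrow> (\<lambda>n. \<Sum>p\<leftarrow>ps. g p n) sums (\<Sum>p\<leftarrow>ps. s p)"
  by (induction ps) (auto intro!: sums_add)

lemma exp_sums_complex: "(\<lambda>k. z ^ k / of_nat (fact k)) sums exp (z :: complex)"
  using exp_converges[of z] by (simp add: scaleR_conv_of_real divide_inverse mult.commute)

lemma mat_exp_on_eigen_expansion:
  assumes F: "eigen_expansion V M a F" and b: "b \<in> V"
  shows "mat_exp_on V (\<lambda>x y. c * M x y) b a = (\<Sum>(\<mu>, f)\<leftarrow>F. exp (c * \<mu>) * f b)"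
proof -
  have "(\<lambda>k. mat_pow_on V (\<lambda>x y. c * M x y) k b a / of_nat (fact k))
      = (\<lambda>k. \<Sum>(\<mu>, f)\<leftarrow>F. (c * \<mu>) ^ k / of_nat (fact k) * f b)"
    using mat_pow_on_eigen_expansion[OF eigen_expansion_scale[OF F] b]
    by (simp add: o_def split_def divide_inverse mult_ac flip: sum_list_const_mult)
  also have "\<dots> sums (\<Sum>(\<mu>, f)\<leftarrow>F. exp (c * \<mu>) * f b)"
    unfolding split_def by (intro sums_sum_list sums_mult2 exp_sums_complex)
  finally show ?thesis
    unfolding mat_exp_on_def by (rule sums_unique[symmetric])
qed

section \<open>Laplacians and blow-ups\<close>

definition neighbours :: "'v graph \<Rightarrow> 'v \<Rightarrow> 'v set" where
  "neighbours G x = {y \<in> verts G. adj G x y}"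

lemma degree_eq_card_neighbours: "degree G x = card (neighbours G x)"
  by (simp add: degree_def neighbours_def)

lemma laplacian_apply:
  assumes "finite (verts G)" "x \<in> verts G"
  shows "mat_vec_on (verts G) (laplacian G) f x = of_nat (degree G x) * f x - (\<Sum>y\<in>neighbours G x. f y)"
proof -
  have "mat_vec_on (verts G) (laplacian G) f x
      = (\<Sum>y\<in>verts G. if x = y then of_nat (degree G x) * f y else 0)
        - (\<Sum>y\<in>verts G. if adj G x y then f y else 0)"
    unfolding mat_vec_on_def laplacian_def sum_subtractf[symmetric]
    by (rule sum.cong) (auto simp: left_diff_distrib)
  then show ?thesis
    using assms by (simp add: neighbours_def sum.inter_filter)
qed

definition even_eigenvalue_support :: "'v graph \<Rightarrow> 'v \<Rightarrow> bool" where
  "even_eigenvalue_support G u \<longleftrightarrow>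
     (\<exists>F. eigen_expansion (verts G) (laplacian G) u F \<and> (\<forall>(\<mu>, _)\<in>set F. \<mu> / 2 \<in> \<nat>))"

lemma verts_blowup2: "verts (blowup2 G) = {0, 1} \<times> verts G"
  by (simp add: blowup2_def verts_def)

lemma neighbours_blowup2: "l \<in> {0, 1} \<Longrightarrow> neighbours (blowup2 G) (l, x) = {0, 1} \<times> neighbours G x"
  by (auto simp: neighbours_def blowup2_def verts_def adj_def)

lemma degree_blowup2:
  "finite (verts G) \<Longrightarrow> l \<in> {0, 1} \<Longrightarrow> degree (blowup2 G) (l, x) = 2 * degree G x"
  by (simp add: degree_eq_card_neighbours neighbours_blowup2 card_cartesian_product)

lemma laplacian_blowup2_apply:
  assumes G: "finite (verts G)" and x: "x \<in> verts G" and l: "l \<in> {0, 1}"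
  shows "mat_vec_on (verts (blowup2 G)) (laplacian (blowup2 G)) f (l, x)
       = 2 * of_nat (degree G x) * f (l, x) - (\<Sum>y\<in>neighbours G x. f (0, y) + f (1, y))"
proof -
  have "(\<Sum>z\<in>neighbours (blowup2 G) (l, x). f z) = (\<Sum>m\<in>{0, 1}. \<Sum>y\<in>neighbours G x. f (m, y))"
    unfolding neighbours_blowup2[OF l] by (simp add: sum.cartesian_product)
  also have "\<dots> = (\<Sum>y\<in>neighbours G x. f (0, y) + f (1, y))"
    by (simp add: sum.distrib)
  finally show ?thesis
    using laplacian_apply[of "blowup2 G" "(l, x)"] G x l by (simp add: verts_blowup2 degree_blowup2)
qed

lemma in_eigenspace_blowup2_lift:
  assumes G: "finite (verts G)" and f: "in_eigenspace_on (verts G) (laplacian G) \<mu> f"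
  shows "in_eigenspace_on (verts (blowup2 G)) (laplacian (blowup2 G)) (2 * \<mu>) (\<lambda>(_, x). f x)"
  unfolding in_eigenspace_on_def
proof
  fix z assume "z \<in> verts (blowup2 G)"
  then obtain l x where z: "z = (l, x)" and l: "l \<in> {0, 1}" and x: "x \<in> verts G"
    by (auto simp: verts_blowup2)
  have "mat_vec_on (verts (blowup2 G)) (laplacian (blowup2 G)) (\<lambda>(_, x). f x) z
      = 2 * mat_vec_on (verts G) (laplacian G) f x"
    using laplacian_blowup2_apply[OF G x l, of "\<lambda>(_, x). f x"] laplacian_apply[OF G x, of f]
    by (simp add: z sum.distrib right_diff_distrib mult.assoc sum_distrib_left flip: mult_2)
  then show "mat_vec_on (verts (blowup2 G)) (laplacian (blowup2 G)) (\<lambda>(_, x). f x) z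
      = 2 * \<mu> * (case z of (_, x) \<Rightarrow> f x)"
    using f x by (simp add: z in_eigenspace_on_def)
qed

definition twin_difference :: "'v \<Rightarrow> nat \<times> 'v \<Rightarrow> complex" where
  "twin_difference u = (\<lambda>(l, x). (-1) ^ l * (if x = u then 1 else 0))"

lemma in_eigenspace_blowup2_twin_difference:
  assumes G: "finite (verts G)"
  shows "in_eigenspace_on (verts (blowup2 G)) (laplacian (blowup2 G)) (2 * of_nat (degree G u))
           (twin_difference u)"
  unfolding in_eigenspace_on_def
proof
  fix z assume "z \<in> verts (blowup2 G)"
  then obtain l x where z: "z = (l, x)" and l: "l \<in> {0, 1}" and x: "x \<in> verts G"
    by (auto simp: verts_blowup2)
  show "mat_vec_on (verts (blowup2 G)) (laplacian (blowup2 G)) (twin_difference u) z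
      = 2 * of_nat (degree G u) * twin_difference u z"
    using laplacian_blowup2_apply[OF G x l] by (simp add: z twin_difference_def)
qed

lemma eigen_expansion_blowup2:
  assumes G: "finite (verts G)" and F: "eigen_expansion (verts G) (laplacian G) u F"
  shows "eigen_expansion (verts (blowup2 G)) (laplacian (blowup2 G)) (0, u)
           ((2 * of_nat (degree G u), \<lambda>z. twin_difference u z / 2)
            # map (\<lambda>(\<mu>, f). (2 * \<mu>, \<lambda>(_, x). f x / 2)) F)"
    (is "eigen_expansion ?V ?L _ ?F")
  unfolding eigen_expansion_def
proof
  show "\<forall>(\<mu>, f)\<in>set ?F. in_eigenspace_on ?V ?L \<mu> f"
    using F in_eigenspace_on_divide[OF in_eigenspace_blowup2_twin_difference[OF G]]
      in_eigenspace_on_divide[OF in_eigenspace_blowup2_lift[OF G]]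
    by (auto simp: eigen_expansion_def split_def)
  show "\<forall>z\<in>?V. (if z = (0, u) then 1 else 0) = (\<Sum>(_, f)\<leftarrow>?F. f z)"
  proof
    fix z assume "z \<in> ?V"
    then obtain l x where z: "z = (l, x)" and l: "l \<in> {0, 1}" and x: "x \<in> verts G"
      by (auto simp: verts_blowup2)
    have "(\<Sum>(_, f)\<leftarrow>?F. f z) = twin_difference u z / 2 + (\<Sum>(_, f)\<leftarrow>F. f x) / 2"
      by (induction F) (simp_all add: z split_def add_divide_distrib)
    also have "\<dots> = (if z = (0, u) then 1 else 0)"
      using F x l by (auto simp: z eigen_expansion_def twin_difference_def)
    finally show "(if z = (0, u) then 1 else 0) = (\<Sum>(_, f)\<leftarrow>?F. f z)" ..
  qed
qed

lemma exp_i_pi_of_nat: "exp (\<i> * of_real pi * of_nat n) = (-1 :: complex) ^ n"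
  by (metis exp_of_nat_mult exp_pi_i' mult.commute)

lemma lap_pst_blowup2:
  assumes G: "finite (verts G)" and u: "u \<in> verts G" and odd_deg: "odd (degree G u)"
    and support: "even_eigenvalue_support G u"
  shows "lap_pst (blowup2 G) (0, u) (1, u)"
proof -
  obtain F where F: "eigen_expansion (verts G) (laplacian G) u F"
    and even: "\<forall>(\<mu>, _)\<in>set F. \<mu> / 2 \<in> \<nat>"
    using support by (auto simp: even_eigenvalue_support_def)
  define c where "c = \<i> * of_real (pi / 2)"
  have c_double: "c * (2 * z) = \<i> * of_real pi * z" for z
    by (simp add: c_def)
  have exp_even: "exp (c * (2 * \<mu>)) = 1" if "\<mu> / 2 \<in> \<nat>" for \<mu>
  proof -
    from that obtain k where "\<mu> / 2 = of_nat k"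
      by (auto elim: Nats_cases)
    then have "\<mu> = of_nat (2 * k)"
      by simp
    then show ?thesis
      unfolding c_double using exp_i_pi_of_nat[of "2 * k"] by simp
  qed
  have exp_odd: "exp (c * (2 * of_nat (degree G u))) = -1"
    unfolding c_double using exp_i_pi_of_nat[of "degree G u"] odd_deg by simp
  have "mat_exp_on (verts (blowup2 G)) (\<lambda>x y. c * laplacian (blowup2 G) x y) z (0, u)
      = (if z = (1, u) then 1 else 0)" if z: "z \<in> verts (blowup2 G)" for z
  proof -
    obtain l x where z_lx: "z = (l, x)" and l: "l \<in> {0, 1}" and x: "x \<in> verts G"
      using z by (auto simp: verts_blowup2)
    have "mat_exp_on (verts (blowup2 G)) (\<lambda>x y. c * laplacian (blowup2 G) x y) z (0, u)
        = exp (c * (2 * of_nat (degree G u))) * (twin_difference u z / 2)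
          + (\<Sum>(\<mu>, f)\<leftarrow>F. exp (c * (2 * \<mu>)) * (f x / 2))"
      using mat_exp_on_eigen_expansion[OF eigen_expansion_blowup2[OF G F] z]
      by (simp add: z_lx o_def split_def)
    also have "\<dots> = - twin_difference u z / 2 + (\<Sum>(_, f)\<leftarrow>F. f x / 2)"
      using even exp_even exp_odd by (auto intro!: arg_cong[where f = sum_list] map_cong)
    also have "\<dots> = - twin_difference u z / 2 + (\<Sum>(_, f)\<leftarrow>F. f x) / 2"
      by (induction F) (simp_all add: split_def add_divide_distrib)
    also have "\<dots> = (if z = (1, u) then 1 else 0)"
      using F x l by (auto simp: z_lx eigen_expansion_def twin_difference_def)
    finally show ?thesis .
  qed
  then show ?thesis
    unfolding lap_pst_def c_def by (intro exI[of _ "pi / 2"] exI[of _ 1]) simp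
qed

section \<open>Cartesian products\<close>

lemma verts_cart_prod:
  "verts (cart_prod Gs) = {xs. length xs = length Gs \<and> (\<forall>j<length Gs. xs ! j \<in> verts (Gs ! j))}"
  by (simp add: cart_prod_def Let_def verts_def)

lemma adj_cart_prod:
  "adj (cart_prod Gs) xs ys \<longleftrightarrow> xs \<in> verts (cart_prod Gs) \<and> ys \<in> verts (cart_prod Gs) \<and>
     (\<exists>j<length Gs. adj (Gs ! j) (xs ! j) (ys ! j) \<and> (\<forall>i<length Gs. i \<noteq> j \<longrightarrow> xs ! i = ys ! i))"
  by (simp add: cart_prod_def Let_def verts_def adj_def)

lemma verts_cart_prod_Nil: "verts (cart_prod []) = {[]}"
  by (auto simp: verts_cart_prod)

lemma neighbours_cart_prod_Nil: "neighbours (cart_prod []) xs = {}"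
  by (simp add: neighbours_def adj_cart_prod)

lemma Cons_in_verts_cart_prod:
  "x # xs \<in> verts (cart_prod (G # Gs)) \<longleftrightarrow> x \<in> verts G \<and> xs \<in> verts (cart_prod Gs)"
  by (auto simp: verts_cart_prod All_less_Suc2)

lemma verts_cart_prod_Cons:
  "verts (cart_prod (G # Gs)) = (\<lambda>(x, xs). x # xs) ` (verts G \<times> verts (cart_prod Gs))"
proof -
  have "z \<in> (\<lambda>(x, xs). x # xs) ` (verts G \<times> verts (cart_prod Gs))"
    if "z \<in> verts (cart_prod (G # Gs))" for z
    using that by (cases z) (force simp: verts_cart_prod, force simp: Cons_in_verts_cart_prod)
  then show ?thesis
    by (auto simp: Cons_in_verts_cart_prod)
qed

lemma finite_verts_cart_prod: "\<forall>G\<in>set Gs. finite (verts G) \<Longrightarrow> finite (verts (cart_prod Gs))"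
  by (induction Gs) (simp_all add: verts_cart_prod_Nil verts_cart_prod_Cons)

lemma adj_cart_prod_Cons:
  "adj (cart_prod (G # Gs)) (x # xs) (y # ys) \<longleftrightarrow>
     x # xs \<in> verts (cart_prod (G # Gs)) \<and> y # ys \<in> verts (cart_prod (G # Gs)) \<and>
     (adj G x y \<and> xs = ys \<or> x = y \<and> adj (cart_prod Gs) xs ys)"
proof -
  have "xs = ys \<longleftrightarrow> (\<forall>i<length Gs. xs ! i = ys ! i)"
    if "xs \<in> verts (cart_prod Gs)" "ys \<in> verts (cart_prod Gs)"
    using that by (auto simp: verts_cart_prod list_eq_iff_nth_eq)
  then show ?thesis
    by (auto simp: adj_cart_prod[of "G # Gs"] adj_cart_prod[of Gs] Cons_in_verts_cart_prod
        Ex_less_Suc2 All_less_Suc2)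
qed

lemma neighbours_cart_prod_Cons:
  assumes "x \<in> verts G" and "xs \<in> verts (cart_prod Gs)"
  shows "neighbours (cart_prod (G # Gs)) (x # xs)
       = (\<lambda>y. y # xs) ` neighbours G x \<union> (\<lambda>ys. x # ys) ` neighbours (cart_prod Gs) xs"
  using assms
  by (auto simp: neighbours_def verts_cart_prod_Cons adj_cart_prod_Cons Cons_in_verts_cart_prod)

lemma
  assumes G: "finite (verts G)" "\<not> adj G x x" "x \<in> verts G"
    and Gs: "finite (verts (cart_prod Gs))" "xs \<in> verts (cart_prod Gs)"
  shows degree_cart_prod_Cons: "degree (cart_prod (G # Gs)) (x # xs) = degree G x + degree (cart_prod Gs) xs"
    and laplacian_cart_prod_Cons_apply:
      "mat_vec_on (verts (cart_prod (G # Gs))) (laplacian (cart_prod (G # Gs))) f (x # xs)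
       = mat_vec_on (verts G) (laplacian G) (\<lambda>y. f (y # xs)) x
         + mat_vec_on (verts (cart_prod Gs)) (laplacian (cart_prod Gs)) (\<lambda>ys. f (x # ys)) xs"
proof -
  have fin: "finite (neighbours G x)" "finite (neighbours (cart_prod Gs) xs)"
    using G Gs by (simp_all add: neighbours_def)
  have disj: "(\<lambda>y. y # xs) ` neighbours G x \<inter> (\<lambda>ys. x # ys) ` neighbours (cart_prod Gs) xs = {}"
    using G by (auto simp: neighbours_def)
  show deg: "degree (cart_prod (G # Gs)) (x # xs) = degree G x + degree (cart_prod Gs) xs"
    unfolding degree_eq_card_neighbours neighbours_cart_prod_Cons[OF G(3) Gs(2)]
    using fin disj by (simp add: card_Un_disjoint card_image inj_on_def)
  have "(\<Sum>z\<in>neighbours (cart_prod (G # Gs)) (x # xs). f z)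
      = (\<Sum>y\<in>neighbours G x. f (y # xs)) + (\<Sum>ys\<in>neighbours (cart_prod Gs) xs. f (x # ys))"
    unfolding neighbours_cart_prod_Cons[OF G(3) Gs(2)]
    using fin disj by (simp add: sum.union_disjoint sum.reindex inj_on_def)
  moreover have "finite (verts (cart_prod (G # Gs)))"
    using G Gs by (simp add: verts_cart_prod_Cons)
  moreover have "x # xs \<in> verts (cart_prod (G # Gs))"
    using G Gs by (simp add: Cons_in_verts_cart_prod)
  ultimately show "mat_vec_on (verts (cart_prod (G # Gs))) (laplacian (cart_prod (G # Gs))) f (x # xs)
       = mat_vec_on (verts G) (laplacian G) (\<lambda>y. f (y # xs)) x
         + mat_vec_on (verts (cart_prod Gs)) (laplacian (cart_prod Gs)) (\<lambda>ys. f (x # ys)) xs"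
    using G Gs by (simp add: laplacian_apply deg algebra_simps)
qed

lemma in_eigenspace_cart_prod_Cons:
  assumes G: "finite (verts G)" "\<forall>x\<in>verts G. \<not> adj G x x" and Gs: "finite (verts (cart_prod Gs))"
    and g: "in_eigenspace_on (verts G) (laplacian G) \<alpha> g"
    and h: "in_eigenspace_on (verts (cart_prod Gs)) (laplacian (cart_prod Gs)) \<beta> h"
  shows "in_eigenspace_on (verts (cart_prod (G # Gs))) (laplacian (cart_prod (G # Gs))) (\<alpha> + \<beta>)
           (\<lambda>z. g (hd z) * h (tl z))"
  unfolding in_eigenspace_on_def
proof
  fix z assume "z \<in> verts (cart_prod (G # Gs))"
  then obtain x xs where z: "z = x # xs" and x: "x \<in> verts G" and xs: "xs \<in> verts (cart_prod Gs)"
    by (auto simp: verts_cart_prod_Cons)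
  show "mat_vec_on (verts (cart_prod (G # Gs))) (laplacian (cart_prod (G # Gs))) (\<lambda>z. g (hd z) * h (tl z)) z
      = (\<alpha> + \<beta>) * (g (hd z) * h (tl z))"
    using laplacian_cart_prod_Cons_apply[OF G(1) _ x Gs(1) xs] G(2) x xs g h
    by (simp add: z mat_vec_on_mult_const mat_vec_on_const_mult in_eigenspace_on_def algebra_simps)
qed

lemma even_eigenvalue_support_cart_prod_Cons:
  assumes G: "finite (verts G)" "\<forall>x\<in>verts G. \<not> adj G x x" and Gs: "finite (verts (cart_prod Gs))"
    and x: "even_eigenvalue_support G x" and xs: "even_eigenvalue_support (cart_prod Gs) xs"
  shows "even_eigenvalue_support (cart_prod (G # Gs)) (x # xs)"
proof -
  obtain F where F: "eigen_expansion (verts G) (laplacian G) x F"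
    and F_even: "\<forall>(\<mu>, _)\<in>set F. \<mu> / 2 \<in> \<nat>"
    using x by (auto simp: even_eigenvalue_support_def)
  obtain H where H: "eigen_expansion (verts (cart_prod Gs)) (laplacian (cart_prod Gs)) xs H"
    and H_even: "\<forall>(\<mu>, _)\<in>set H. \<mu> / 2 \<in> \<nat>"
    using xs by (auto simp: even_eigenvalue_support_def)
  define FH where "FH = [(\<alpha> + \<beta>, \<lambda>z. g (hd z) * h (tl z)). (\<alpha>, g) \<leftarrow> F, (\<beta>, h) \<leftarrow> H]"
  have "\<forall>(\<mu>, f)\<in>set FH. in_eigenspace_on (verts (cart_prod (G # Gs))) (laplacian (cart_prod (G # Gs))) \<mu> f"
    using F H in_eigenspace_cart_prod_Cons[OF G Gs] by (fastforce simp: FH_def eigen_expansion_def)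
  moreover have "\<forall>(\<mu>, _)\<in>set FH. \<mu> / 2 \<in> \<nat>"
    using F_even H_even by (fastforce simp: FH_def add_divide_distrib intro: Nats_add)
  moreover have "(if z = x # xs then 1 else 0) = (\<Sum>(_, f)\<leftarrow>FH. f z)"
    if "z \<in> verts (cart_prod (G # Gs))" for z
  proof -
    from that obtain y ys where z: "z = y # ys"
      and y: "y \<in> verts G" and ys: "ys \<in> verts (cart_prod Gs)"
      by (auto simp: verts_cart_prod_Cons)
    have "(\<Sum>(_, f)\<leftarrow>FH. f z) = (\<Sum>(_, g)\<leftarrow>F. g y) * (\<Sum>(_, h)\<leftarrow>H. h ys)"
      unfolding FH_def z
      by (induction F) (simp_all add: split_def o_def sum_list_const_mult distrib_right)
    also have "\<dots> = (if y = x then 1 else 0) * (if ys = xs then 1 else 0)"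
      using F H y ys by (simp add: eigen_expansion_def)
    finally show ?thesis
      by (simp add: z)
  qed
  ultimately show ?thesis
    unfolding even_eigenvalue_support_def eigen_expansion_def by blast
qed

lemma even_eigenvalue_support_cart_prod_Nil: "even_eigenvalue_support (cart_prod []) []"
proof -
  have "in_eigenspace_on (verts (cart_prod [])) (laplacian (cart_prod [])) 0 (\<lambda>_. 1)"
    using laplacian_apply[of "cart_prod []" "[]"]
    by (simp add: in_eigenspace_on_def verts_cart_prod_Nil degree_eq_card_neighbours
        neighbours_cart_prod_Nil)
  then show ?thesis
    unfolding even_eigenvalue_support_def eigen_expansion_def
    by (intro exI[of _ "[(0, \<lambda>_. 1)]"]) (simp add: verts_cart_prod_Nil)
qed

lemma even_eigenvalue_support_cart_prod:
  assumes "\<forall>G\<in>set Gs. finite (verts G) \<and>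
             (\<forall>x\<in>verts G. \<not> adj G x x \<and> even_eigenvalue_support G x)"
    and "xs \<in> verts (cart_prod Gs)"
  shows "even_eigenvalue_support (cart_prod Gs) xs"
  using assms
proof (induction Gs arbitrary: xs)
  case Nil
  then show ?case
    by (simp add: verts_cart_prod_Nil even_eigenvalue_support_cart_prod_Nil)
next
  case (Cons G Gs)
  then obtain x xs' where "xs = x # xs'" "x \<in> verts G" "xs' \<in> verts (cart_prod Gs)"
    by (auto simp: verts_cart_prod_Cons)
  with Cons show ?case
    by (simp add: even_eigenvalue_support_cart_prod_Cons finite_verts_cart_prod)
qed

section \<open>Complete graphs and Hamming graphs\<close>

lemma verts_complete_graph: "verts (complete_graph n) = {..<n}"
  by (auto simp: complete_graph_def verts_def)

lemma adj_complete_graph: "adj (complete_graph n) x y \<longleftrightarrow> x < n \<and> y < n \<and> x \<noteq> y"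
  by (simp add: complete_graph_def adj_def)

lemma neighbours_complete_graph: "x < n \<Longrightarrow> neighbours (complete_graph n) x = {..<n} - {x}"
  by (auto simp: neighbours_def verts_complete_graph adj_complete_graph)

lemma degree_complete_graph: "x < n \<Longrightarrow> degree (complete_graph n) x = n - 1"
  by (simp add: degree_eq_card_neighbours neighbours_complete_graph)

lemma laplacian_complete_graph_apply:
  assumes "x < n"
  shows "mat_vec_on {..<n} (laplacian (complete_graph n)) g x = of_nat n * g x - (\<Sum>y<n. g y)"
proof -
  have "(\<Sum>y<n. g y) = g x + (\<Sum>y\<in>{..<n} - {x}. g y)"
    using assms by (simp add: sum.remove)
  then show ?thesis
    using assms laplacian_apply[of "complete_graph n" x g]
    by (simp add: verts_complete_graph degree_complete_graph neighbours_complete_graph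
        of_nat_diff algebra_simps)
qed

lemma even_eigenvalue_support_complete_graph:
  assumes "even n" and x: "x < n"
  shows "even_eigenvalue_support (complete_graph n) x"
proof -
  define g where "g = (\<lambda>y. (if y = x then 1 else 0) - 1 / of_nat n :: complex)"
  have "n \<noteq> 0"
    using x by simp
  then have "in_eigenspace_on (verts (complete_graph n)) (laplacian (complete_graph n)) (of_nat n) g"
    and "in_eigenspace_on (verts (complete_graph n)) (laplacian (complete_graph n)) 0 (\<lambda>_. 1 / of_nat n)"
    using x by (auto simp: in_eigenspace_on_def laplacian_complete_graph_apply verts_complete_graph
        g_def sum_subtractf algebra_simps)
  moreover have "of_nat n / 2 \<in> (\<nat> :: complex set)"
    using \<open>even n\<close> by (auto elim!: evenE)
  ultimately show ?thesis
    unfolding even_eigenvalue_support_def eigen_expansion_def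
    by (intro exI[of _ "[(of_nat n, g), (0, \<lambda>_. 1 / of_nat n)]"]) (simp add: g_def)
qed

lemma odd_degree_cart_prod_complete_graphs:
  assumes "\<forall>n\<in>set ns. even n" and "u \<in> verts (cart_prod (map complete_graph ns))"
  shows "odd (degree (cart_prod (map complete_graph ns)) u) \<longleftrightarrow> odd (length ns)"
  using assms
proof (induction ns arbitrary: u)
  case Nil
  then show ?case
    by (simp add: degree_eq_card_neighbours neighbours_cart_prod_Nil)
next
  case (Cons n ns)
  then obtain x xs where u: "u = x # xs" and x: "x < n"
    and xs: "xs \<in> verts (cart_prod (map complete_graph ns))"
    by (auto simp: verts_cart_prod_Cons verts_complete_graph)
  have "degree (cart_prod (map complete_graph (n # ns))) u
      = (n - 1) + degree (cart_prod (map complete_graph ns)) xs"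
    using degree_cart_prod_Cons[of "complete_graph n" x "map complete_graph ns" xs] x xs
    by (simp add: u verts_complete_graph adj_complete_graph degree_complete_graph finite_verts_cart_prod)
  with Cons x xs show ?case
    by auto
qed

theorem corollary6:
  shows "(\<forall>ns :: nat list. length ns \<ge> 2 \<and> odd (length ns) \<and> (\<forall>n\<in>set ns. n \<ge> 2 \<and> even n) \<longrightarrow>
            (\<forall>u\<in>verts (cart_prod (map complete_graph ns)).
               lap_pst (blowup2 (cart_prod (map complete_graph ns))) (0, u) (1, u)))
       \<and> (\<forall>d q :: nat. q \<ge> 2 \<and> even q \<and> d \<ge> 2 \<and> odd d \<longrightarrow>
            (\<forall>u\<in>verts (hamming d q). lap_pst (blowup2 (hamming d q)) (0, u) (1, u)))"
proof -
  have pst: "lap_pst (blowup2 (cart_prod (map complete_graph ns))) (0, u) (1, u)"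
    if "odd (length ns)" and even: "\<forall>n\<in>set ns. even n"
      and u: "u \<in> verts (cart_prod (map complete_graph ns))" for ns u
  proof (rule lap_pst_blowup2[OF _ u])
    show "finite (verts (cart_prod (map complete_graph ns)))"
      by (simp add: finite_verts_cart_prod verts_complete_graph)
    show "odd (degree (cart_prod (map complete_graph ns)) u)"
      using odd_degree_cart_prod_complete_graphs[OF even u] \<open>odd (length ns)\<close> by simp
    show "even_eigenvalue_support (cart_prod (map complete_graph ns)) u"
      using even u
      by (intro even_eigenvalue_support_cart_prod)
        (auto simp: verts_complete_graph adj_complete_graph even_eigenvalue_support_complete_graph)
  qed
  have "hamming d q = cart_prod (map complete_graph (replicate d q))" for d q
    by (simp add: hamming_def map_replicate)
  then show ?thesis
    using pst[of "replicate _ _"] pst by auto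
qed

end
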